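(* If a graph $G$ on $[n]$ is geometrically copious, then every vertex of $G$ has degree at least three.
   Context: Setup. $G\subseteq\binom{[n]}{2}$ is a simple graph on $[n]$, with $n\ge4$, and $G_i$ is the set of neighbours of $i$. The kinematic space $\mathcal K_G\subseteq\mathbb P^{|G|-1}$ is cut out by $\sum_{j\in G_i}s_{ij}=0$ for $i\in[n]$. $\mathcal H$ is the braid arrangement $\bigcup_{i<j}\{x_i=x_j\}$. Scattering correspondence. $$\mathcal V_G=\{(s,x)\in\mathbb P^{|G|-1}\times(\mathbb P^{n-1}\setminus\mathcal H): s\in\mathcal K_G,\ \textstyle\sum_{j\in G_i}s_{ij}/(x_i-x_j)=0\ \forall i\}.$$ Solutions in $x$ come in $\mathrm{PGL}(2)$-orbits, where $\mathrm{PGL}(2)$ acts by $x_i\mapsto(ax_i+b)/(cx_i+d)$. Each orbit corresponds to a point of the moduli space $\mathcal M_{0,n}$ of $n$ distinct points on $\mathbb P^1$, giving projections $\mathcal K_G\leftarrow\mathcal V_G\to\mathcal M_{0,n}$. Geometrically copious. $G$ is geometrically copious if $\mathcal V_G\to\mathcal M_{0,n}$ is dominant and the fiber of $\mathcal V_G\to\mathcal K_G$ over a generic point of $\mathcal K_G$ has dimension two in $\mathbb P^{n-1}$ (i.e. modulo $\mathrm{PGL}(2)$ this map is finite-to-one). *)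

theory Defs
  imports Complex_Main
begin

inductive poly_fun :: "(('i \<Rightarrow> complex) \<Rightarrow> complex) \<Rightarrow> bool" where
  pconst: "poly_fun (\<lambda>x. c)"
| pvar:   "poly_fun (\<lambda>x. x i)"
| padd:   "poly_fun p \<Longrightarrow> poly_fun q \<Longrightarrow> poly_fun (\<lambda>x. p x + q x)"
| pmult:  "poly_fun p \<Longrightarrow> poly_fun q \<Longrightarrow> poly_fun (\<lambda>x. p x * q x)"

definition zclosed :: "('i \<Rightarrow> complex) set \<Rightarrow> bool" where
  "zclosed A \<longleftrightarrow> (\<exists>P. (\<forall>p\<in>P. poly_fun p) \<and> A = {x. \<forall>p\<in>P. p x = 0})"

definition zcl :: "('i \<Rightarrow> complex) set \<Rightarrow> ('i \<Rightarrow> complex) set" where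
  "zcl S = \<Inter>{A. zclosed A \<and> S \<subseteq> A}"

definition zdense :: "('i \<Rightarrow> complex) set \<Rightarrow> bool" where
  "zdense S \<longleftrightarrow> zcl S = UNIV"

definition zirred :: "('i \<Rightarrow> complex) set \<Rightarrow> bool" where
  "zirred Z \<longleftrightarrow> zclosed Z \<and> Z \<noteq> {} \<and>
     (\<forall>A B. zclosed A \<longrightarrow> zclosed B \<longrightarrow> Z \<subseteq> A \<union> B \<longrightarrow> Z \<subseteq> A \<or> Z \<subseteq> B)"

definition zchain :: "('i \<Rightarrow> complex) set \<Rightarrow> (nat \<Rightarrow> ('i \<Rightarrow> complex) set) \<Rightarrow> nat \<Rightarrow> bool" where
  "zchain S Z k \<longleftrightarrow> (\<forall>j\<le>k. zirred (Z j)) \<and> (\<forall>j<k. Z j \<subset> Z (Suc j)) \<and> Z k \<subseteq> zcl S"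

definition has_zdim :: "('i \<Rightarrow> complex) set \<Rightarrow> nat \<Rightarrow> bool" where
  "has_zdim S d \<longleftrightarrow> (\<exists>Z. zchain S Z d) \<and> \<not> (\<exists>Z. zchain S Z (Suc d))"

text \<open>Dimension of a subset of projective space \<open>\<P>(\<complex>^I)\<close>, given by its affine cone
  (a scaling-invariant set of nonzero vectors): one less than the affine dimension of the cone.\<close>
definition has_pdim :: "('i \<Rightarrow> complex) set \<Rightarrow> nat \<Rightarrow> bool" where
  "has_pdim C d \<longleftrightarrow> has_zdim C (Suc d)"

definition simple_graph :: "'v set set \<Rightarrow> bool" where
  "simple_graph G \<longleftrightarrow> (\<forall>e\<in>G. card e = 2)"

definition nbrs :: "'v set set \<Rightarrow> 'v \<Rightarrow> 'v set" where
  "nbrs G i = {j. {i, j} \<in> G}"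

definition degree :: "'v set set \<Rightarrow> 'v \<Rightarrow> nat" where
  "degree G i = card (nbrs G i)"

text \<open>Affine cone over the kinematic space \<open>K_G\<close>: vectors \<open>s \<in> \<complex>^G\<close> (coordinates outside G are 0)
  satisfying momentum conservation.\<close>
definition kin_cone :: "'v set set \<Rightarrow> ('v set \<Rightarrow> complex) set" where
  "kin_cone G = {s. (\<forall>e. e \<notin> G \<longrightarrow> s e = 0) \<and> (\<forall>i. (\<Sum>j\<in>nbrs G i. s {i, j}) = 0)}"

definition distinct_pts :: "('v \<Rightarrow> complex) \<Rightarrow> bool" where
  "distinct_pts x \<longleftrightarrow> (\<forall>i j. i \<noteq> j \<longrightarrow> x i \<noteq> x j)"

definition scattering :: "'v set set \<Rightarrow> ('v set \<Rightarrow> complex) \<Rightarrow> ('v \<Rightarrow> complex) \<Rightarrow> bool" where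
  "scattering G s x \<longleftrightarrow> (\<forall>i. (\<Sum>j\<in>nbrs G i. s {i, j} / (x i - x j)) = 0)"

text \<open>Affine cone over the fiber of \<open>V_G \<rightarrow> K_G\<close> over \<open>[s]\<close>, inside \<open>\<P>^{n-1} \<setminus> \<H>\<close>.\<close>
definition scat_fiber :: "'v set set \<Rightarrow> ('v set \<Rightarrow> complex) \<Rightarrow> ('v \<Rightarrow> complex) set" where
  "scat_fiber G s = {x. distinct_pts x \<and> scattering G s x}"

text \<open>Configurations (with finite coordinates) lying in the image of \<open>V_G\<close>; its Zariski
  density in \<open>\<complex>^n\<close> is equivalent to dominance of \<open>V_G \<rightarrow> \<M>_{0,n}\<close>.\<close>
definition scat_image :: "'v set set \<Rightarrow> ('v \<Rightarrow> complex) set" where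
  "scat_image G = {x. distinct_pts x \<and> (\<exists>s\<in>kin_cone G. (\<exists>e. s e \<noteq> 0) \<and> scattering G s x)}"

definition geometrically_copious :: "'v set set \<Rightarrow> bool" where
  "geometrically_copious G \<longleftrightarrow>
     zdense (scat_image G) \<and>
     (\<exists>f. poly_fun f \<and> (\<exists>s0\<in>kin_cone G. (\<exists>e. s0 e \<noteq> 0) \<and> f s0 \<noteq> 0) \<and>
          (\<forall>s\<in>kin_cone G. (\<exists>e. s e \<noteq> 0) \<longrightarrow> f s \<noteq> 0 \<longrightarrow> has_pdim (scat_fiber G s) 2))"

end

(*
  If vertex i has degree at most two, momentum conservation and the scattering equation at i
  force every s_ij at i to vanish: for neighbours j, k we get s_ij + s_ik = 0 and
  s_ij (x_j - x_k) = 0.  Then x_i no longer occurs in any scattering equation, while the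
  remaining equations are invariant under Moebius transformations.  Hence every point x of the
  fibre over s comes with a four-parameter family of fibre points: an arbitrary value of x_i
  together with a three-parameter family of Moebius transformations of the other coordinates.
  Parametrised polynomially, the family maps a nonempty Zariski open set of parameters into the
  fibre; since affine space is irreducible, the whole image lies in the closure of the fibre.
  Freeing the parameters one at a time gives a strictly increasing chain of five irreducible
  closed sets, so the fibre has affine dimension at least four, contradicting projective
  dimension two.
*)
theory Submission
  imports Defs "HOL-Computational_Algebra.Polynomial"
begin

hide_const (open) Polynomial.degree

section \<open>Irreducibility of affine space\<close>

lemma poly_fun_restrict_line:
  assumes "poly_fun p"
  shows "\<exists>q. \<forall>z. p (\<lambda>j. u j + z * (w j - u j)) = poly q z"
  using assms
proof induction
  case (pconst c)
  show ?case by (rule exI[of _ "[:c:]"]) simp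
next
  case (pvar i)
  show ?case by (rule exI[of _ "[:u i, w i - u i:]"]) simp
next
  case (padd p q)
  then obtain P Q where "\<forall>z. p (\<lambda>j. u j + z * (w j - u j)) = poly P z"
    and "\<forall>z. q (\<lambda>j. u j + z * (w j - u j)) = poly Q z" by blast
  then show ?case by (intro exI[of _ "P + Q"]) simp
next
  case (pmult p q)
  then obtain P Q where "\<forall>z. p (\<lambda>j. u j + z * (w j - u j)) = poly P z"
    and "\<forall>z. q (\<lambda>j. u j + z * (w j - u j)) = poly Q z" by blast
  then show ?case by (intro exI[of _ "P * Q"]) simp
qed

lemma poly_fun_mult_eq_0:
  assumes "poly_fun p" "poly_fun q" "\<And>x. p x * q x = 0"
  shows "p = (\<lambda>_. 0) \<or> q = (\<lambda>_. 0)"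
proof (rule ccontr)
  assume "\<not> ?thesis"
  then obtain u w where pu: "p u \<noteq> 0" and qw: "q w \<noteq> 0" by (auto simp: fun_eq_iff)
  obtain P where P: "\<forall>z. p (\<lambda>j. u j + z * (w j - u j)) = poly P z"
    using poly_fun_restrict_line[OF assms(1)] by blast
  obtain Q where Q: "\<forall>z. q (\<lambda>j. u j + z * (w j - u j)) = poly Q z"
    using poly_fun_restrict_line[OF assms(2)] by blast
  have "poly P 0 \<noteq> 0" "poly Q 1 \<noteq> 0"
    using pu qw P[rule_format, of 0] Q[rule_format, of 1] by simp_all
  then have "P * Q \<noteq> 0" by auto
  moreover have "\<forall>z. poly (P * Q) z = 0" using P Q assms(3) by (metis poly_mult)
  ultimately show False using poly_all_0_iff_0 by blast
qed

lemma zclosed_Un_eq_UNIV: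
  assumes "zclosed A" "zclosed B" "A \<union> B = UNIV"
  shows "A = UNIV \<or> B = UNIV"
proof (rule ccontr)
  obtain P where P: "\<forall>p\<in>P. poly_fun p" "A = {x. \<forall>p\<in>P. p x = 0}"
    using assms(1) unfolding zclosed_def by blast
  obtain Q where Q: "\<forall>q\<in>Q. poly_fun q" "B = {x. \<forall>q\<in>Q. q x = 0}"
    using assms(2) unfolding zclosed_def by blast
  assume "\<not> ?thesis"
  then obtain u w where "u \<notin> A" "w \<notin> B" by blast
  then obtain p q where p: "p \<in> P" "p u \<noteq> 0" and q: "q \<in> Q" "q w \<noteq> 0"
    unfolding P(2) Q(2) by auto
  have "p x * q x = 0" for x
  proof -
    have "x \<in> A \<or> x \<in> B" using assms(3) by blast
    then show ?thesis unfolding P(2) Q(2) using p(1) q(1) by auto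
  qed
  then have "p = (\<lambda>_. 0) \<or> q = (\<lambda>_. 0)"
    using P(1) Q(1) p(1) q(1) by (intro poly_fun_mult_eq_0) auto
  then show False using p(2) q(2) by auto
qed

section \<open>Zariski closures and polynomial maps\<close>

lemma zclosed_zero_set: "poly_fun g \<Longrightarrow> zclosed {x. g x = 0}"
  unfolding zclosed_def by (intro exI[of _ "{g}"]) auto

lemma zclosed_Inter:
  assumes "\<And>A. A \<in> F \<Longrightarrow> zclosed A"
  shows "zclosed (\<Inter>F)"
proof -
  have "\<forall>A\<in>F. \<exists>P. (\<forall>p\<in>P. poly_fun p) \<and> (\<forall>x. x \<in> A \<longleftrightarrow> (\<forall>p\<in>P. p x = 0))"
    using assms unfolding zclosed_def by blast
  from bchoice[OF this] obtain PP where
    PP: "\<forall>A\<in>F. (\<forall>p\<in>PP A. poly_fun p) \<and> (\<forall>x. x \<in> A \<longleftrightarrow> (\<forall>p\<in>PP A. p x = 0))" ..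
  then have "\<Inter>F = {x. \<forall>p\<in>(\<Union>A\<in>F. PP A). p x = 0}" by auto
  moreover have "\<forall>p\<in>(\<Union>A\<in>F. PP A). poly_fun p" using PP by auto
  ultimately show ?thesis unfolding zclosed_def by blast
qed

lemma zclosed_zcl: "zclosed (zcl S)"
  unfolding zcl_def by (rule zclosed_Inter) auto

lemma zcl_subset: "S \<subseteq> zcl S"
  unfolding zcl_def by auto

lemma zcl_minimal: "zclosed A \<Longrightarrow> S \<subseteq> A \<Longrightarrow> zcl S \<subseteq> A"
  unfolding zcl_def by auto

lemma zcl_mono: "S \<subseteq> T \<Longrightarrow> zcl S \<subseteq> zcl T"
  unfolding zcl_def by auto

lemma zcl_empty: "zcl {} = {}"
  using zcl_minimal[OF zclosed_zero_set[OF poly_fun.pconst[of 1]], of "{}"] by simp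

lemma zclosed_eq_UNIV_if_nonvanishing_subset:
  assumes "zclosed C" "poly_fun h" "h \<noteq> (\<lambda>_. 0)" "{u. h u \<noteq> 0} \<subseteq> C"
  shows "C = UNIV"
proof -
  have "C \<union> {u. h u = 0} = UNIV" using assms(4) by auto
  then have "C = UNIV \<or> {u. h u = 0} = UNIV"
    by (rule zclosed_Un_eq_UNIV[OF assms(1) zclosed_zero_set[OF assms(2)]])
  then show ?thesis using assms(3) by auto
qed

lemma has_zdim_nonempty:
  assumes "has_zdim S d"
  shows "S \<noteq> {}"
proof
  obtain Z where "zchain S Z d" using assms unfolding has_zdim_def by blast
  then have "Z d \<noteq> {}" "Z d \<subseteq> zcl S" unfolding zchain_def zirred_def by auto
  moreover assume "S = {}"
  ultimately show False using zcl_empty by blast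
qed

definition poly_map :: "(('j \<Rightarrow> complex) \<Rightarrow> 'i \<Rightarrow> complex) \<Rightarrow> bool" where
  "poly_map F \<longleftrightarrow> (\<forall>i. poly_fun (\<lambda>u. F u i))"

lemma poly_fun_compose:
  assumes "poly_fun p" "poly_map F"
  shows "poly_fun (\<lambda>u. p (F u))"
  using assms(1)
proof induction
  case (pvar i)
  then show ?case using assms(2) unfolding poly_map_def by blast
qed (auto intro: poly_fun.intros)

lemma poly_fun_diff: "poly_fun p \<Longrightarrow> poly_fun q \<Longrightarrow> poly_fun (\<lambda>x. p x - q x)"
  using poly_fun.padd[OF _ poly_fun.pmult[OF poly_fun.pconst[of "-1"]], of p q] by simp

lemma poly_fun_prod:
  "finite A \<Longrightarrow> (\<And>l. l \<in> A \<Longrightarrow> poly_fun (f l)) \<Longrightarrow> poly_fun (\<lambda>x. \<Prod>l\<in>A. f l x)"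
  by (induction A rule: finite_induct) (auto intro: poly_fun.intros)

lemma zclosed_vimage:
  assumes "zclosed A" "poly_map F"
  shows "zclosed (F -` A)"
proof -
  obtain P where P: "\<forall>p\<in>P. poly_fun p" "A = {x. \<forall>p\<in>P. p x = 0}"
    using assms(1) unfolding zclosed_def by blast
  have "F -` A = {u. \<forall>q\<in>(\<lambda>p u. p (F u)) ` P. q u = 0}" using P(2) by auto
  moreover have "\<forall>q\<in>(\<lambda>p u. p (F u)) ` P. poly_fun q"
    using P(1) poly_fun_compose[OF _ assms(2)] by blast
  ultimately show ?thesis unfolding zclosed_def by blast
qed

lemma zirred_zcl_range:
  assumes "poly_map F"
  shows "zirred (zcl (range F))"
  unfolding zirred_def
proof (intro conjI allI impI)
  show "zclosed (zcl (range F))" by (rule zclosed_zcl)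
  show "zcl (range F) \<noteq> {}" using zcl_subset[of "range F"] by auto
next
  fix A B assume A: "zclosed A" and B: "zclosed B" and sub: "zcl (range F) \<subseteq> A \<union> B"
  have "F -` A \<union> F -` B = UNIV" using sub zcl_subset[of "range F"] by auto
  then have "F -` A = UNIV \<or> F -` B = UNIV"
    by (rule zclosed_Un_eq_UNIV[OF zclosed_vimage[OF A assms] zclosed_vimage[OF B assms]])
  then have "range F \<subseteq> A \<or> range F \<subseteq> B" by auto
  then show "zcl (range F) \<subseteq> A \<or> zcl (range F) \<subseteq> B"
    using zcl_minimal[OF A] zcl_minimal[OF B] by auto
qed

lemma zcl_range_psubset:
  assumes "range F \<subseteq> range F'" "poly_fun g" "\<And>u. g (F u) = 0" "g (F' u') \<noteq> 0"
  shows "zcl (range F) \<subset> zcl (range F')"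
proof
  show "zcl (range F) \<subseteq> zcl (range F')" using assms(1) by (rule zcl_mono)
  have "zcl (range F) \<subseteq> {y. g y = 0}"
    using assms(3) by (intro zcl_minimal zclosed_zero_set assms(2)) auto
  moreover have "F' u' \<in> zcl (range F')" using zcl_subset by blast
  ultimately show "zcl (range F) \<noteq> zcl (range F')" using assms(4) by blast
qed

lemma zchain_zcl_ranges:
  assumes "\<And>j. poly_map (F j)" "\<And>j. j < k \<Longrightarrow> zcl (range (F j)) \<subset> zcl (range (F (Suc j)))"
    and "range (F k) \<subseteq> zcl S"
  shows "zchain S (\<lambda>j. zcl (range (F j))) k"
  unfolding zchain_def
  using assms(2) zirred_zcl_range[OF assms(1)] zcl_minimal[OF zclosed_zcl assms(3)] by simp

lemma zchain_mono: "zchain S Z k \<Longrightarrow> S \<subseteq> zcl T \<Longrightarrow> zchain T Z k"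
  unfolding zchain_def using zcl_minimal[OF zclosed_zcl] by blast

section \<open>Symmetries of the scattering equations\<close>

lemma nbrs_not_self: "simple_graph G \<Longrightarrow> m \<in> nbrs G j \<Longrightarrow> m \<noteq> j"
  unfolding simple_graph_def nbrs_def by force

lemma kin_cone_edge_vanishes_at_low_degree:
  fixes G :: "'v::finite set set"
  assumes G: "simple_graph G" and s: "s \<in> kin_cone G" and x: "x \<in> scat_fiber G s"
    and deg: "degree G i < 3"
  shows "s {i, m} = 0"
proof (cases "m \<in> nbrs G i")
  case False
  then show ?thesis using s by (simp add: kin_cone_def nbrs_def)
next
  case True
  have mom: "(\<Sum>j\<in>nbrs G i. s {i, j}) = 0" using s by (simp add: kin_cone_def)
  have scat: "(\<Sum>j\<in>nbrs G i. s {i, j} / (x i - x j)) = 0"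
    using x by (simp add: scat_fiber_def scattering_def)
  have "card (nbrs G i) \<noteq> 0" using True by (auto simp: card_eq_0_iff)
  moreover have "card (nbrs G i) < 3" using deg by (simp only: Defs.degree_def)
  ultimately have "card (nbrs G i) = 1 \<or> card (nbrs G i) = 2" by linarith
  then show ?thesis
  proof
    assume "card (nbrs G i) = 1"
    then obtain j where "nbrs G i = {j}" using card_1_singletonE by blast
    then show ?thesis using True mom by simp
  next
    assume "card (nbrs G i) = 2"
    then obtain j k where jk: "nbrs G i = {j, k}" "j \<noteq> k" by (meson card_2_iff)
    have "j \<noteq> i" "k \<noteq> i" using jk nbrs_not_self[OF G] by auto
    then have d: "x i - x j \<noteq> 0" "x i - x k \<noteq> 0" "x j - x k \<noteq> 0"
      using x jk(2) by (auto simp: scat_fiber_def distinct_pts_def)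
    have sk: "s {i, k} = - s {i, j}" using mom jk by (simp add: eq_neg_iff_add_eq_0 add.commute)
    have "s {i, j} / (x i - x j) - s {i, j} / (x i - x k) = 0" using scat jk sk by simp
    then have "s {i, j} * (x j - x k) / ((x i - x j) * (x i - x k)) = 0"
      using d by (simp add: field_simps)
    then have "s {i, j} = 0" using d by simp
    then show ?thesis using True jk sk by auto
  qed
qed

lemma moebius_diff:
  fixes a b c d x y :: "'a::field"
  assumes "c * x + d \<noteq> 0" "c * y + d \<noteq> 0"
  shows "(a * x + b) / (c * x + d) - (a * y + b) / (c * y + d)
       = (a * d - b * c) * (x - y) / ((c * x + d) * (c * y + d))"
  using assms by (simp add: field_simps)

text \<open>Writing \<open>c y + d = (c x + d) - c (x - y)\<close> splits each term of the transformed scattering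
  equation into a multiple of the old term and a multiple of \<open>s\<close> itself, which sum to zero by
  the scattering equation and momentum conservation respectively.\<close>
lemma divide_moebius_diff:
  fixes a b c d x y s :: "'a::field"
  assumes "c * x + d \<noteq> 0" "c * y + d \<noteq> 0" "a * d - b * c \<noteq> 0" "x \<noteq> y"
  shows "s / ((a * x + b) / (c * x + d) - (a * y + b) / (c * y + d))
       = (c * x + d) / (a * d - b * c) * ((c * x + d) * (s / (x - y)) - c * s)"
  using assms by (simp add: moebius_diff field_simps)

lemma scat_fiber_moebius:
  assumes G: "simple_graph G" and s: "s \<in> kin_cone G" and x: "x \<in> scat_fiber G s"
    and det: "a * d - b * c \<noteq> 0" and nz: "\<And>k. c * x k + d \<noteq> 0"
  shows "(\<lambda>k. (a * x k + b) / (c * x k + d)) \<in> scat_fiber G s"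
proof -
  define y where "y = (\<lambda>k. (a * x k + b) / (c * x k + d))"
  have dist: "distinct_pts x" using x by (simp add: scat_fiber_def)
  have "y k - y m \<noteq> 0" if "k \<noteq> m" for k m
    using moebius_diff[of c "x k" d "x m" a b] det dist that nz[of k] nz[of m]
    by (simp add: y_def distinct_pts_def)
  then have "distinct_pts y" unfolding distinct_pts_def by simp
  moreover have "(\<Sum>m\<in>nbrs G j. s {j, m} / (y j - y m)) = 0" for j
  proof -
    define K where "K = (c * x j + d) / (a * d - b * c)"
    have "x j \<noteq> x m" if "m \<in> nbrs G j" for m
      using dist nbrs_not_self[OF G that] by (auto simp: distinct_pts_def)
    then have "(\<Sum>m\<in>nbrs G j. s {j, m} / (y j - y m))
        = (\<Sum>m\<in>nbrs G j. K * ((c * x j + d) * (s {j, m} / (x j - x m)) - c * s {j, m}))"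
      unfolding y_def K_def using det nz by (intro sum.cong refl divide_moebius_diff) auto
    also have "\<dots> = K * ((c * x j + d) * (\<Sum>m\<in>nbrs G j. s {j, m} / (x j - x m))
                         - c * (\<Sum>m\<in>nbrs G j. s {j, m}))"
      by (simp add: sum_subtractf sum_distrib_left right_diff_distrib)
    also have "\<dots> = 0"
      using x s by (simp add: scat_fiber_def scattering_def kin_cone_def)
    finally show ?thesis .
  qed
  ultimately show ?thesis unfolding y_def by (simp add: scat_fiber_def scattering_def)
qed

lemma scat_fiber_update_isolated:
  assumes iso: "\<And>m. s {i, m} = 0" and x: "x \<in> scat_fiber G s" and z: "\<And>k. k \<noteq> i \<Longrightarrow> z \<noteq> x k"
  shows "x(i := z) \<in> scat_fiber G s"
proof -
  have "distinct_pts (x(i := z))"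
    using x z by (auto simp: scat_fiber_def distinct_pts_def)
  moreover have "s {j, m} / ((x(i := z)) j - (x(i := z)) m) = s {j, m} / (x j - x m)" for j m
    using iso[of j] iso[of m] by (cases "j = i \<or> m = i") (auto simp: insert_commute)
  then have "scattering G s (x(i := z)) \<longleftrightarrow> scattering G s x"
    unfolding scattering_def by presburger
  ultimately show ?thesis using x by (simp add: scat_fiber_def)
qed

section \<open>A four-parameter family in the fibre\<close>

text \<open>The Moebius transformation \<open>t \<mapsto> (u 2 * t + u 1) / (u 3 * t + 1)\<close> of all coordinates
  except \<open>i\<close>, multiplied by the common denominator \<open>\<Prod>l \<noteq> i. u 3 * x l + 1\<close> so that it is
  polynomial in \<open>u\<close>; coordinate \<open>i\<close> is the free parameter \<open>u 0\<close>.\<close>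
definition moebius_family :: "'v::finite \<Rightarrow> ('v \<Rightarrow> complex) \<Rightarrow> (nat \<Rightarrow> complex) \<Rightarrow> 'v \<Rightarrow> complex" where
  "moebius_family i x u k =
     (if k = i then u 0 else (u 2 * x k + u 1) * (\<Prod>l\<in>UNIV - {i, k}. u 3 * x l + 1))"

lemma poly_map_moebius_family: "poly_map (moebius_family i x)"
  unfolding poly_map_def
proof
  fix k
  show "poly_fun (\<lambda>u. moebius_family i x u k)"
  proof (cases "k = i")
    case False
    then show ?thesis unfolding moebius_family_def
      by (simp, intro poly_fun.pmult poly_fun.padd poly_fun_prod poly_fun.pvar poly_fun.pconst) simp_all
  qed (simp add: moebius_family_def poly_fun.pvar)
qed

lemma moebius_family_base: "moebius_family i x (\<lambda>n. if n = 0 then x i else if n = 2 then 1 else 0) = x"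
  by (auto simp: moebius_family_def)

lemma moebius_family_eq_moebius:
  fixes x :: "'v::finite \<Rightarrow> complex" and i :: 'v
  assumes nz: "\<And>l. u 3 * x l + 1 \<noteq> 0"
  defines "R \<equiv> \<Prod>l\<in>UNIV - {i}. u 3 * x l + 1"
  shows "moebius_family i x u = (\<lambda>k. (R * u 2 * x k + R * u 1) / (u 3 * x k + 1))(i := u 0)"
proof
  fix k
  show "moebius_family i x u k = ((\<lambda>k. (R * u 2 * x k + R * u 1) / (u 3 * x k + 1))(i := u 0)) k"
  proof (cases "k = i")
    case False
    define P where "P = (\<Prod>l\<in>UNIV - {i, k}. u 3 * x l + 1)"
    have "UNIV - {i} = insert k (UNIV - {i, k})" using False by auto
    then have "R = (u 3 * x k + 1) * P" by (simp add: R_def P_def)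
    then have "R * u 2 * x k + R * u 1 = (u 3 * x k + 1) * ((u 2 * x k + u 1) * P)"
      by (simp add: algebra_simps)
    then show ?thesis using False nz[of k] by (simp add: moebius_family_def P_def)
  qed (simp add: moebius_family_def)
qed

lemma moebius_family_in_scat_fiber:
  fixes G :: "'v::finite set set"
  assumes G: "simple_graph G" and s: "s \<in> kin_cone G" and x: "x \<in> scat_fiber G s"
    and iso: "\<And>m. s {i, m} = 0"
    and det: "u 2 - u 1 * u 3 \<noteq> 0" and nz: "\<And>l. u 3 * x l + 1 \<noteq> 0"
    and vertex: "\<And>k. k \<noteq> i \<Longrightarrow> u 0 \<noteq> moebius_family i x u k"
  shows "moebius_family i x u \<in> scat_fiber G s"
proof -
  define R where "R = (\<Prod>l\<in>UNIV - {i}. u 3 * x l + 1)"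
  define y where "y = (\<lambda>k. (R * u 2 * x k + R * u 1) / (u 3 * x k + 1))"
  have "R \<noteq> 0" using nz by (simp add: R_def)
  then have "(R * u 2) * 1 - (R * u 1) * u 3 \<noteq> 0" using det by (simp add: right_diff_distrib')
  then have y: "y \<in> scat_fiber G s" unfolding y_def using scat_fiber_moebius[OF G s x _ nz] by blast
  have eq: "moebius_family i x u = y(i := u 0)"
    unfolding y_def R_def using nz by (rule moebius_family_eq_moebius)
  have "u 0 \<noteq> y k" if "k \<noteq> i" for k
    using vertex[OF that] that by (simp add: eq)
  then show ?thesis unfolding eq by (rule scat_fiber_update_isolated[where s = s and i = i, OF iso y])
qed

lemma range_moebius_family_subset_zcl:
  fixes G :: "'v::finite set set"
  assumes G: "simple_graph G" and s: "s \<in> kin_cone G" and x: "x \<in> scat_fiber G s"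
    and iso: "\<And>m. s {i, m} = 0"
  shows "range (moebius_family i x) \<subseteq> zcl (scat_fiber G s)"
proof -
  define h where "h u = (u 2 - u 1 * u 3) * (\<Prod>l\<in>UNIV. u 3 * x l + 1)
                        * (\<Prod>k\<in>UNIV - {i}. u 0 - moebius_family i x u k)" for u
  have "poly_fun (\<lambda>u. moebius_family i x u k)" for k
    using poly_map_moebius_family unfolding poly_map_def by blast
  then have "poly_fun h"
    unfolding h_def by (intro poly_fun.pmult poly_fun_diff poly_fun_prod poly_fun.padd
                          poly_fun.pvar poly_fun.pconst) auto
  moreover have "h \<noteq> (\<lambda>_. 0)"
  proof -
    define u\<^sub>0 :: "nat \<Rightarrow> complex" where "u\<^sub>0 n = (if n = 0 then x i else if n = 2 then 1 else 0)" for n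
    have "moebius_family i x u\<^sub>0 = x" unfolding u\<^sub>0_def by (rule moebius_family_base)
    then have "h u\<^sub>0 \<noteq> 0"
      using x by (auto simp: h_def u\<^sub>0_def scat_fiber_def distinct_pts_def)
    then show ?thesis by auto
  qed
  moreover have "{u. h u \<noteq> 0} \<subseteq> moebius_family i x -` zcl (scat_fiber G s)"
    using moebius_family_in_scat_fiber[OF G s x iso] zcl_subset by (fastforce simp: h_def)
  ultimately have "moebius_family i x -` zcl (scat_fiber G s) = UNIV"
    using zclosed_eq_UNIV_if_nonvanishing_subset
      zclosed_vimage[OF zclosed_zcl poly_map_moebius_family] by blast
  then show ?thesis by auto
qed

text \<open>Parameters \<open>n \<ge> j\<close> are frozen at the values for which \<^const>\<open>moebius_family\<close> returns \<open>x\<close>.\<close>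
definition moebius_stage :: "'v::finite \<Rightarrow> ('v \<Rightarrow> complex) \<Rightarrow> nat \<Rightarrow> (nat \<Rightarrow> complex) \<Rightarrow> 'v \<Rightarrow> complex"
  where "moebius_stage i x j u =
    moebius_family i x (\<lambda>n. if n < j then u n else if n = 0 then x i else if n = 2 then 1 else 0)"

lemma poly_map_moebius_stage: "poly_map (moebius_stage i x j)"
proof -
  have params: "poly_map (\<lambda>u n. if n < j then u n else if n = 0 then x i else if n = 2 then 1 else 0)"
    unfolding poly_map_def
  proof
    fix n
    show "poly_fun (\<lambda>u. if n < j then u n else if n = 0 then x i else if n = 2 then 1 else 0)"
      by (cases "n < j") (simp_all add: poly_fun.pvar poly_fun.pconst)
  qed
  show ?thesis
    unfolding poly_map_def
  proof
    fix k
    have "poly_fun (\<lambda>v. moebius_family i x v k)"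
      using poly_map_moebius_family unfolding poly_map_def by blast
    then show "poly_fun (\<lambda>u. moebius_stage i x j u k)"
      unfolding moebius_stage_def by (rule poly_fun_compose[OF _ params])
  qed
qed

lemma range_moebius_stage_mono: "range (moebius_stage i x j) \<subseteq> range (moebius_stage i x (Suc j))"
proof
  fix y assume "y \<in> range (moebius_stage i x j)"
  then obtain u where "y = moebius_stage i x j u" by blast
  also have "\<dots> = moebius_stage i x (Suc j)
                   (\<lambda>n. if n < j then u n else if n = 0 then x i else if n = 2 then 1 else 0)"
    unfolding moebius_stage_def by (rule arg_cong[where f = "moebius_family i x"]) auto
  finally show "y \<in> range (moebius_stage i x (Suc j))" by blast
qed

lemma moebius_stage_4: "moebius_stage i x 4 = moebius_family i x"
  by (intro ext) (simp add: moebius_stage_def moebius_family_def)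

lemma moebius_stage_vertex: "moebius_stage i x j u i = (if 0 < j then u 0 else x i)"
  by (simp add: moebius_stage_def moebius_family_def)

lemma moebius_stage_affine:
  "k \<noteq> i \<Longrightarrow> j \<le> 3 \<Longrightarrow>
     moebius_stage i x j u k = (if 2 < j then u 2 else 1) * x k + (if 1 < j then u 1 else 0)"
  by (simp add: moebius_stage_def moebius_family_def)

lemma moebius_stage_psubset_affine:
  assumes ks: "distinct [i, k1, k2]" and x: "distinct_pts x" and j: "j < 3"
  shows "zcl (range (moebius_stage i x j)) \<subset> zcl (range (moebius_stage i x (Suc j)))"
proof -
  have ks': "k1 \<noteq> i" "k2 \<noteq> i" "x k1 - x k2 \<noteq> 0" using ks x by (auto simp: distinct_pts_def)
  consider "j = 0" | "j = 1" | "j = 2" using j by linarith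
  then show ?thesis
  proof cases
    case 1
    show ?thesis
      by (rule zcl_range_psubset[OF range_moebius_stage_mono, where g = "\<lambda>y. y i - x i"
            and u' = "\<lambda>_. x i + 1"])
        (simp_all add: 1 moebius_stage_vertex poly_fun_diff poly_fun.pvar poly_fun.pconst)
  next
    case 2
    show ?thesis
      by (rule zcl_range_psubset[OF range_moebius_stage_mono, where g = "\<lambda>y. y k1 - x k1"
            and u' = "\<lambda>_. 1"])
        (use ks' in \<open>simp_all add: 2 moebius_stage_affine poly_fun_diff poly_fun.pvar poly_fun.pconst\<close>)
  next
    case 3
    have "poly_fun (\<lambda>y. (y k1 - y k2) - (x k1 - x k2))"
      by (intro poly_fun_diff poly_fun.pvar poly_fun.pconst)
    then show ?thesis
      by (rule zcl_range_psubset[OF range_moebius_stage_mono, where u' = "\<lambda>_. 2"])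
        (use ks' in \<open>simp_all add: 3 moebius_stage_affine algebra_simps\<close>)
  qed
qed

text \<open>The polynomial \<open>g\<close> vanishes iff the points \<open>(x k, y k)\<close>, \<open>k = k1, k2, k3\<close>, are collinear,
  as they are for affine \<open>y\<close>. At \<open>u 3 = -1 / x k3\<close> the common factor kills \<open>y k1\<close> and \<open>y k2\<close>
  but not \<open>y k3\<close>.\<close>
lemma moebius_stage_3_psubset_4:
  assumes ks: "distinct [i, k1, k2, k3]" and x: "distinct_pts x" and x3: "x k3 \<noteq> 0"
  shows "zcl (range (moebius_stage i x 3)) \<subset> zcl (range (moebius_stage i x 4))"
proof -
  define g where "g y = (x k2 * y k3 - x k3 * y k2) - (x k1 * y k3 - x k3 * y k1)
                        + (x k1 * y k2 - x k2 * y k1)" for y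
  define u where "u n = (if n = 3 then - 1 / x k3 else if n = 1 then 0 else 1)" for n :: nat
  have ks': "k1 \<noteq> i" "k2 \<noteq> i" "k3 \<noteq> i" "k1 \<noteq> k2" "k1 \<noteq> k3" "k2 \<noteq> k3"
    using ks by auto
  have pole: "u 3 * x k3 + 1 = 0" using x3 by (simp add: u_def)
  have "(\<Prod>l\<in>UNIV - {i, k}. u 3 * x l + 1) = 0" if "k \<noteq> k3" for k
    using ks' pole that by (intro prod_zero bexI[of _ k3]) auto
  then have "moebius_family i x u k1 = 0" "moebius_family i x u k2 = 0"
    using ks' by (simp_all add: moebius_family_def)
  moreover have "moebius_family i x u k3 \<noteq> 0"
  proof -
    have "u 3 * x l + 1 \<noteq> 0" if "l \<noteq> k3" for l
      using that x x3 by (auto simp: u_def distinct_pts_def field_simps)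
    then show ?thesis using ks' x3 by (simp add: moebius_family_def u_def)
  qed
  ultimately have "g (moebius_stage i x 4 u) \<noteq> 0"
    using ks' x by (simp add: moebius_stage_4 g_def distinct_pts_def)
  moreover have "g (moebius_stage i x 3 v) = 0" for v
    using ks' by (simp add: g_def moebius_stage_affine algebra_simps)
  moreover have "poly_fun g"
    unfolding g_def by (intro poly_fun_diff poly_fun.padd poly_fun.pmult poly_fun.pvar poly_fun.pconst)
  ultimately show ?thesis
    using zcl_range_psubset[OF range_moebius_stage_mono[of i x 3]] by simp
qed

lemma obtain_three_other_vertices:
  fixes x :: "'v::finite \<Rightarrow> complex"
  assumes card: "card (UNIV :: 'v set) \<ge> 4" and x: "distinct_pts x"
  obtains k1 k2 k3 where "distinct [i, k1, k2, k3]" "x k3 \<noteq> 0"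
proof -
  have "3 \<le> card (UNIV - {i})" using card by (simp add: card_Diff_singleton)
  then obtain T where T: "T \<subseteq> UNIV - {i}" "card T = 3" by (rule obtain_subset_with_card_n)
  then obtain a b c where "T = {a, b, c}" "a \<noteq> b" "b \<noteq> c" "a \<noteq> c" by (auto simp: card_3_iff)
  then have abc: "distinct [i, a, b, c]" using T(1) by auto
  show ?thesis
  proof (cases "x c = 0")
    case True
    moreover have "x b \<noteq> x c" using x abc by (simp add: distinct_pts_def)
    ultimately have "x b \<noteq> 0" by simp
    then show ?thesis using abc by (intro that[of a c b]) auto
  qed (use abc that in blast)
qed

lemma moebius_family_zchain:
  fixes x :: "'v::finite \<Rightarrow> complex"
  assumes "card (UNIV :: 'v set) \<ge> 4" and x: "distinct_pts x"
  shows "zchain (range (moebius_family i x)) (\<lambda>j. zcl (range (moebius_stage i x j))) 4"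
proof (rule zchain_zcl_ranges)
  obtain k1 k2 k3 where ks: "distinct [i, k1, k2, k3]" "x k3 \<noteq> 0"
    using obtain_three_other_vertices[OF assms] .
  show "zcl (range (moebius_stage i x j)) \<subset> zcl (range (moebius_stage i x (Suc j)))" if "j < 4" for j
  proof (cases "j < 3")
    case True
    then show ?thesis using ks(1) x by (intro moebius_stage_psubset_affine[of i k1 k2]) auto
  next
    case False
    then have "j = 3" using that by simp
    then show ?thesis using moebius_stage_3_psubset_4[OF ks(1) x ks(2)] by simp
  qed
  show "range (moebius_stage i x 4) \<subseteq> zcl (range (moebius_family i x))"
    by (simp add: moebius_stage_4 zcl_subset)
qed (rule poly_map_moebius_stage)

lemma scat_fiber_zchain_4:
  fixes G :: "'v::finite set set"
  assumes "card (UNIV :: 'v set) \<ge> 4" "simple_graph G" "s \<in> kin_cone G" "x \<in> scat_fiber G s"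
    and "\<And>m. s {i, m} = 0"
  shows "\<exists>Z. zchain (scat_fiber G s) Z 4"
proof -
  have "distinct_pts x" using assms(4) by (simp add: scat_fiber_def)
  then show ?thesis
    using moebius_family_zchain[OF assms(1)] zchain_mono range_moebius_family_subset_zcl[OF assms(2-)]
    by blast
qed

theorem mainTheorem6:
  fixes G :: "'v::finite set set"
  assumes "card (UNIV :: 'v set) \<ge> 4"
    and "simple_graph G"
    and "geometrically_copious G"
  shows "\<forall>i. degree G i \<ge> 3"
proof (rule ccontr)
  assume "\<not> (\<forall>i. degree G i \<ge> 3)"
  then obtain i where deg: "degree G i < 3" by (auto simp: not_le)
  obtain s where s: "s \<in> kin_cone G" and "has_pdim (scat_fiber G s) 2"
    using assms(3) unfolding geometrically_copious_def by blast
  then have dim: "has_zdim (scat_fiber G s) 3" by (simp add: has_pdim_def)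
  then obtain x where x: "x \<in> scat_fiber G s" using has_zdim_nonempty by blast
  have "\<And>m. s {i, m} = 0" using kin_cone_edge_vanishes_at_low_degree[OF assms(2) s x deg] .
  then have "\<exists>Z. zchain (scat_fiber G s) Z 4" using scat_fiber_zchain_4[OF assms(1,2) s x] by blast
  moreover have "\<not> (\<exists>Z. zchain (scat_fiber G s) Z 4)" using dim by (simp add: has_zdim_def)
  ultimately show False by blast
qed

end
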